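(* Let $L$ be a factorial R-lattice of type I admitting a regular equivalence relation $\sim$, and let $\{l_i\}$ be a family of mutually orthogonal minimal elements of $L$ which is maximal with respect to these two properties. Then $\bigvee_i l_i=1$.
   Context: Orthocomplemented lattice (paper's convention): a set $L$ with a partial order $\le$ in which every subset has a supremum and an infimum ($l\vee l'$, $l\wedge l'$ denote binary sup/inf, $0=\inf L$, $1=\sup L$), such that: (continuity) for every increasing net $(l_i)$ and every $l$, $\bigvee_i(l\wedge l_i)=l\wedge\bigvee_i l_i$, and for every decreasing net $(l_i)$ and every $l$, $\bigwedge_i(l\vee l_i)=l\vee\bigwedge_i l_i$; (modularity) $l\le l''$ implies $(l\vee l')\wedge l''=l\vee(l'\wedge l'')$ for all $l'$; together with a map $l\mapsto l^\perp$, also written $1-l$, satisfying $l^{\perp\perp}=l$, $l\vee l^\perp=1$, $l\wedge l^\perp=0$, and $l\le l'\Rightarrow l'^\perp\le l^\perp$. For $l'\le l$ put $l-l'=(1-l')\wedge l$. Write $\perp(l)=\{l'\in L: l'\le 1-l\}$; elements of $\perp(l)$ are orthogonal to $l$; a family is mutually orthogonal if any two distinct members are orthogonal. $l$ commutes with $l'$ if $l=(l\wedge l')\vee(l\wedge l'^\perp)$; $c(l)$ is the set of elements commuting with $l$; $C(L)=\bigcap_{l\in L}c(l)$. $L$ is factorial if $C(L)=\{0,1\}$ and abelian if $C(L)=L$. For $l\in L$, $L\wedge l=\{l'\in L:l'\le l\}$ is an orthocomplemented lattice with complement $l'\mapsto l-l'$; $l$ is an abelian element if $L\wedge l$ is abelian.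 A factorial lattice is of type I if it has at least one nonzero abelian element. $L$ is an R-lattice if $C(L\wedge l)=\{c\wedge l: c\in C(L)\}$ for every $l\in L$. An element $l\ne 0$ is minimal if for every $l'\in L$ either $l\wedge l'=0$ or $l\wedge l'=l$; $Min(L)$ is the set of minimal elements and $Min(l)=\{m\in Min(L): m\le l\}$. Regular equivalence relation: for an equivalence relation $\sim$ on $L$ write $l\le_\sim l'$ if there is $l''\le l'$ with $l\sim l''$. $\sim$ is regular if: (1) $l\sim 0\iff l=0$; (2) $l\ge l'$ and $l\le_\sim l'$ imply $l\sim l'$; (3) for all $l,l'$, $l\le_\sim l'$ or $l'\le_\sim l$; (4) if $(l_i)$, $(l_i')$ are families of mutually orthogonal elements with $l_i\sim l_i'$ for all $i$, then $\bigvee_i l_i\sim\bigvee_i l_i'$; (5) $l'\le l$ and $l'\sim l$ imply $l'=l$. *)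

theory Defs
  imports Main
begin

unbundle lattice_syntax

text \<open>The lattice L is the carrier type 'a (a complete lattice); the orthocomplement
  l \<mapsto> 1 - l is the function oc.\<close>

definition directed_up :: "'a::complete_lattice set \<Rightarrow> bool" where
  "directed_up D \<longleftrightarrow> (\<forall>a\<in>D. \<forall>b\<in>D. \<exists>c\<in>D. a \<le> c \<and> b \<le> c)"

definition directed_down :: "'a::complete_lattice set \<Rightarrow> bool" where
  "directed_down D \<longleftrightarrow> (\<forall>a\<in>D. \<forall>b\<in>D. \<exists>c\<in>D. c \<le> a \<and> c \<le> b)"

definition ortho_lattice :: "('a::complete_lattice \<Rightarrow> 'a) \<Rightarrow> bool" where
  "ortho_lattice oc \<longleftrightarrow>
     (\<forall>(D::'a set) l. directed_up D \<longrightarrow> (SUP d\<in>D. l \<sqinter> d) = l \<sqinter> Sup D) \<and>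
     (\<forall>(D::'a set) l. directed_down D \<longrightarrow> (INF d\<in>D. l \<squnion> d) = l \<squnion> Inf D) \<and>
     (\<forall>(l::'a) l' l''. l \<le> l'' \<longrightarrow> (l \<squnion> l') \<sqinter> l'' = l \<squnion> (l' \<sqinter> l'')) \<and>
     (\<forall>l. oc (oc l) = l) \<and>
     (\<forall>l. l \<squnion> oc l = top) \<and>
     (\<forall>l. l \<sqinter> oc l = bot) \<and>
     (\<forall>l l'. l \<le> l' \<longrightarrow> oc l' \<le> oc l)"

definition orth :: "('a::complete_lattice \<Rightarrow> 'a) \<Rightarrow> 'a \<Rightarrow> 'a \<Rightarrow> bool" where
  "orth oc l l' \<longleftrightarrow> l \<le> oc l'"

definition mutually_orth :: "('a::complete_lattice \<Rightarrow> 'a) \<Rightarrow> 'a set \<Rightarrow> bool" where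
  "mutually_orth oc M \<longleftrightarrow> (\<forall>x\<in>M. \<forall>y\<in>M. x \<noteq> y \<longrightarrow> orth oc x y)"

text \<open>Centre of the lattice L \<and> l (with complement b \<mapsto> l - b = (1 - b) \<sqinter> l):
  the elements a \<le> l with a = (a \<sqinter> b) \<squnion> (a \<sqinter> (l - b)) for every b \<le> l.\<close>
definition center_in :: "('a::complete_lattice \<Rightarrow> 'a) \<Rightarrow> 'a \<Rightarrow> 'a set" where
  "center_in oc l = {a. a \<le> l \<and> (\<forall>b. b \<le> l \<longrightarrow> a = (a \<sqinter> b) \<squnion> (a \<sqinter> (oc b \<sqinter> l)))}"

definition center :: "('a::complete_lattice \<Rightarrow> 'a) \<Rightarrow> 'a set" where
  "center oc = {a. \<forall>b. a = (a \<sqinter> b) \<squnion> (a \<sqinter> oc b)}"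

definition factorial :: "('a::complete_lattice \<Rightarrow> 'a) \<Rightarrow> bool" where
  "factorial oc \<longleftrightarrow> center oc = {bot, top}"

definition abelian_elem :: "('a::complete_lattice \<Rightarrow> 'a) \<Rightarrow> 'a \<Rightarrow> bool" where
  "abelian_elem oc l \<longleftrightarrow> center_in oc l = {a. a \<le> l}"

definition type_I :: "('a::complete_lattice \<Rightarrow> 'a) \<Rightarrow> bool" where
  "type_I oc \<longleftrightarrow> factorial oc \<and> (\<exists>l. l \<noteq> bot \<and> abelian_elem oc l)"

definition R_lattice :: "('a::complete_lattice \<Rightarrow> 'a) \<Rightarrow> bool" where
  "R_lattice oc \<longleftrightarrow> (\<forall>l. center_in oc l = {c \<sqinter> l | c. c \<in> center oc})"

definition minimal :: "'a::complete_lattice \<Rightarrow> bool" where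
  "minimal l \<longleftrightarrow> l \<noteq> bot \<and> (\<forall>l'. l \<sqinter> l' = bot \<or> l \<sqinter> l' = l)"

definition le_sim :: "('a::complete_lattice \<Rightarrow> 'a \<Rightarrow> bool) \<Rightarrow> 'a \<Rightarrow> 'a \<Rightarrow> bool" where
  "le_sim r l l' \<longleftrightarrow> (\<exists>l''. l'' \<le> l' \<and> r l l'')"

text \<open>Families in (4) are indexed by a set I of
  elements of 'a (any family of mutually orthogonal elements reduces to this, since
  its nonzero members are pairwise distinct).\<close>
definition regular_equiv :: "('a::complete_lattice \<Rightarrow> 'a) \<Rightarrow> ('a \<Rightarrow> 'a \<Rightarrow> bool) \<Rightarrow> bool" where
  "regular_equiv oc r \<longleftrightarrow> equivp r \<and>
     (\<forall>l. r l bot \<longleftrightarrow> l = bot) \<and>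
     (\<forall>l l'. l' \<le> l \<and> le_sim r l l' \<longrightarrow> r l l') \<and>
     (\<forall>l l'. le_sim r l l' \<or> le_sim r l' l) \<and>
     (\<forall>(I::'a set) f g.
        (\<forall>i\<in>I. \<forall>j\<in>I. i \<noteq> j \<longrightarrow> orth oc (f i) (f j) \<and> orth oc (g i) (g j)) \<and>
        (\<forall>i\<in>I. r (f i) (g i)) \<longrightarrow> r (SUP i\<in>I. f i) (SUP i\<in>I. g i)) \<and>
     (\<forall>l l'. l' \<le> l \<and> r l' l \<longrightarrow> l' = l)"

end

theory Submission
  imports Defs
begin

text \<open>
  In a factorial R-lattice every nonzero abelian element a is minimal:
  each l \<le> a is central in the segment below a, hence of the form c \<sqinter> a with c
  central in L, i.e. c \<in> {0, 1}.  Minimality is invariant under a regular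
  equivalence \<sim>, and every nonzero element l is comparable with a in the preorder
  induced by \<sim>; in both cases l lies above an element equivalent to a, hence
  above a minimal element.
  Now let M be a maximal mutually orthogonal family of minimal elements.  If
  \<Squnion>M \<noteq> 1, then 1 - \<Squnion>M \<noteq> 0 contains a minimal element m, which is orthogonal to
  every member of M and not in M, so M \<union> {m} contradicts maximality.
\<close>

lemma ortho_lattice_oc:
  assumes "ortho_lattice oc"
  shows "oc (oc l) = l" and "l \<squnion> oc l = top" and "l \<sqinter> oc l = bot"
    and "l \<le> l' \<Longrightarrow> oc l' \<le> oc l"
  using assms unfolding ortho_lattice_def by simp_all

lemma regular_equivD:
  assumes "regular_equiv oc r"
  shows regular_equiv_sym: "r a b \<Longrightarrow> r b a"
    and regular_equiv_trans: "r a b \<Longrightarrow> r b c \<Longrightarrow> r a c"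
    and regular_equiv_bot: "r l bot \<longleftrightarrow> l = bot"
    and regular_equiv_comparable: "le_sim r l l' \<or> le_sim r l' l"
    and regular_equiv_no_proper: "l' \<le> l \<Longrightarrow> r l' l \<Longrightarrow> l' = l"
proof -
  have eq: "equivp r" using assms unfolding regular_equiv_def by blast
  show "r a b \<Longrightarrow> r b a" using eq by (meson equivp_symp)
  show "r a b \<Longrightarrow> r b c \<Longrightarrow> r a c" using eq by (meson equivp_transp)
  show "r l bot \<longleftrightarrow> l = bot" "le_sim r l l' \<or> le_sim r l' l"
    and "l' \<le> l \<Longrightarrow> r l' l \<Longrightarrow> l' = l"
    using assms unfolding regular_equiv_def by simp_all
qed

lemma minimal_below:
  assumes "minimal m" and "y \<le> m"
  shows "y = bot \<or> y = m"
  using assms unfolding minimal_def by (metis inf_absorb2)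

lemma regular_equiv_minimal:
  assumes reg: "regular_equiv oc r" and m: "minimal m" and rml: "r m l"
  shows "minimal l"
proof -
  have l_nonzero: "l \<noteq> bot"
    using rml m regular_equiv_bot[OF reg] regular_equiv_sym[OF reg]
    unfolding minimal_def by blast
  have "x = bot \<or> x = l" if xl: "x \<le> l" for x
  proof (cases "le_sim r m x")
    case True
    then obtain y where y: "y \<le> x" "r m y" unfolding le_sim_def by blast
    have "r y l" using y(2) rml regular_equiv_sym[OF reg] regular_equiv_trans[OF reg] by blast
    then have "y = l" using regular_equiv_no_proper[OF reg] y(1) xl by (meson order_trans)
    then show ?thesis using y(1) xl by auto
  next
    case False
    then obtain y where y: "y \<le> m" "r x y"
      using regular_equiv_comparable[OF reg] unfolding le_sim_def by blast
    from minimal_below[OF m y(1)] show ?thesis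
    proof
      assume "y = bot"
      then show ?thesis using y(2) regular_equiv_bot[OF reg] by auto
    next
      assume "y = m"
      then have "r x l" using y(2) rml regular_equiv_trans[OF reg] by blast
      then show ?thesis using regular_equiv_no_proper[OF reg] xl by blast
    qed
  qed
  then show ?thesis using l_nonzero unfolding minimal_def by (metis inf_le1)
qed

text \<open>In a factorial R-lattice every nonzero abelian element is minimal: its
  subelements are central in the segment below it, hence cut out by 0 or 1.\<close>
lemma abelian_elem_minimal:
  assumes "factorial oc" and "R_lattice oc"
    and "a \<noteq> bot" and "abelian_elem oc a"
  shows "minimal a"
proof -
  have "a \<sqinter> l = bot \<or> a \<sqinter> l = a" for l
  proof -
    have "a \<sqinter> l \<in> center_in oc a" using assms(4) unfolding abelian_elem_def by auto
    then obtain c where "c \<in> center oc" and "a \<sqinter> l = c \<sqinter> a"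
      using assms(2) unfolding R_lattice_def by blast
    moreover have "c = bot \<or> c = top" using calculation(1) assms(1) unfolding factorial_def by auto
    ultimately show ?thesis by auto
  qed
  then show ?thesis using assms(3) unfolding minimal_def by blast
qed

text \<open>If a regular equivalence exists and some element is minimal, then every nonzero
  element lies above a minimal element (an equivalent copy of the given one).\<close>
lemma regular_equiv_minimal_below:
  fixes oc :: "'a::complete_lattice \<Rightarrow> 'a" and a l :: 'a
  assumes reg: "regular_equiv oc r" and a: "minimal a" and l: "l \<noteq> bot"
  shows "\<exists>m. minimal m \<and> m \<le> l"
proof (cases "le_sim r a l")
  case True
  then show ?thesis using regular_equiv_minimal[OF reg a] unfolding le_sim_def by blast
next
  case False
  then obtain y where y: "y \<le> a" "r l y"
    using regular_equiv_comparable[OF reg] unfolding le_sim_def by blast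
  have "y \<noteq> bot" using y(2) l regular_equiv_bot[OF reg] by blast
  then have "y = a" using minimal_below[OF a y(1)] by blast
  then have "r a l" using y(2) regular_equiv_sym[OF reg] by blast
  then show ?thesis using regular_equiv_minimal[OF reg a] by blast
qed

lemma mutually_orth_extend:
  assumes ol: "ortho_lattice oc" and M: "mutually_orth oc M"
    and m: "m \<noteq> bot" and m_le: "m \<le> oc (Sup M)"
  shows "mutually_orth oc (insert m M)" and "m \<notin> M"
proof -
  have "orth oc x m \<and> orth oc m x" if "x \<in> M" for x
  proof
    have x_le: "x \<le> Sup M" using that by (simp add: Sup_upper)
    then show "orth oc m x"
      using m_le ortho_lattice_oc(4)[OF ol] unfolding orth_def by (meson order_trans)
    have "oc (oc (Sup M)) \<le> oc m" using ortho_lattice_oc(4)[OF ol m_le] .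
    then show "orth oc x m"
      using x_le ortho_lattice_oc(1)[OF ol] unfolding orth_def by (metis order_trans)
  qed
  then show "mutually_orth oc (insert m M)" using M unfolding mutually_orth_def by auto
  show "m \<notin> M"
  proof
    assume "m \<in> M"
    then have "m \<le> Sup M \<sqinter> oc (Sup M)" using m_le by (simp add: Sup_upper)
    then show False using ortho_lattice_oc(3)[OF ol] m by (simp add: bot_unique)
  qed
qed

theorem mainTheorem7:
  fixes oc :: "'a::complete_lattice \<Rightarrow> 'a" and M :: "'a set"
  assumes "ortho_lattice oc"
    and "factorial oc" and "R_lattice oc" and "type_I oc"
    and "\<exists>r. regular_equiv oc r"
    and "\<forall>m\<in>M. minimal m"
    and "mutually_orth oc M"
    and "\<forall>M'. M \<subseteq> M' \<and> (\<forall>m\<in>M'. minimal m) \<and> mutually_orth oc M' \<longrightarrow> M' = M"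
  shows "Sup M = top"
proof (rule ccontr)
  assume not_top: "Sup M \<noteq> top"
  obtain r where reg: "regular_equiv oc r" using assms(5) by blast
  obtain a where "a \<noteq> bot" and "abelian_elem oc a" using assms(4) unfolding type_I_def by blast
  then have a_min: "minimal a" using abelian_elem_minimal assms(2,3) by blast
  have "oc (Sup M) \<noteq> bot"
    using not_top ortho_lattice_oc(2)[OF assms(1), of "Sup M"] by auto
  then obtain m where m: "minimal m" "m \<le> oc (Sup M)"
    using regular_equiv_minimal_below[OF reg a_min] by blast
  then have m_nonzero: "m \<noteq> bot" unfolding minimal_def by blast
  have "insert m M = M"
    using assms(6,8) m(1) mutually_orth_extend(1)[OF assms(1,7) m_nonzero m(2)] by blast
  then show False using mutually_orth_extend(2)[OF assms(1,7) m_nonzero m(2)] by blast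
qed

end
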